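(* Let $G=(V,E)$ be any $n$-vertex $d$-regular graph with girth at least $g$, and let $m\in\mathbb{N}$. For any map $\psi:V\to V$ with $\mathrm{rad}_G(\psi)<g/2-1$, we have $$\Pr_{v\sim V,\ u_1,\dots,u_m\sim N_G(v)}\left[|\psi(\{u_1,\dots,u_m\})|<m\right]<\frac{m^2}{\sqrt{d}},$$ where $v$ is uniform on $V$ and, given $v$, $u_1,\dots,u_m$ are i.i.d. uniform samples from $N_G(v)$.
   Context: $G$ is an undirected unweighted graph; $d_G$ denotes its shortest-path metric and $N_G(v)$ the set of neighbors of $v$. The girth of $G$ is the length of its shortest cycle. For $\psi:V\to V$, $\mathrm{rad}_G(\psi)=\max_{v\in V}d_G(v,\psi(v))$. *)

theory Defs
  imports "HOL-Library.FuncSet" "HOL-Library.Extended_Nat" Complex_Main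
begin

definition simple_graph :: "'a set \<Rightarrow> ('a \<Rightarrow> 'a \<Rightarrow> bool) \<Rightarrow> bool" where
  "simple_graph V E \<longleftrightarrow> (\<forall>x y. E x y \<longrightarrow> x \<in> V \<and> y \<in> V \<and> E y x \<and> x \<noteq> y)"

definition neighbors :: "'a set \<Rightarrow> ('a \<Rightarrow> 'a \<Rightarrow> bool) \<Rightarrow> 'a \<Rightarrow> 'a set" where
  "neighbors V E v = {u \<in> V. E v u}"

definition regular :: "'a set \<Rightarrow> ('a \<Rightarrow> 'a \<Rightarrow> bool) \<Rightarrow> nat \<Rightarrow> bool" where
  "regular V E d \<longleftrightarrow> (\<forall>v\<in>V. card (neighbors V E v) = d)"

definition is_walk :: "('a \<Rightarrow> 'a \<Rightarrow> bool) \<Rightarrow> 'a list \<Rightarrow> bool" where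
  "is_walk E xs \<longleftrightarrow> xs \<noteq> [] \<and> (\<forall>i. Suc i < length xs \<longrightarrow> E (xs ! i) (xs ! Suc i))"

text \<open>Shortest-path distance (infinite if no path exists).\<close>
definition gdist :: "('a \<Rightarrow> 'a \<Rightarrow> bool) \<Rightarrow> 'a \<Rightarrow> 'a \<Rightarrow> enat" where
  "gdist E u v = (INF xs \<in> {xs. is_walk E xs \<and> hd xs = u \<and> last xs = v}. enat (length xs - 1))"

definition is_cycle :: "('a \<Rightarrow> 'a \<Rightarrow> bool) \<Rightarrow> 'a list \<Rightarrow> bool" where
  "is_cycle E xs \<longleftrightarrow> length xs \<ge> 3 \<and> distinct xs \<and> is_walk E xs \<and> E (last xs) (hd xs)"

definition girth_ge :: "('a \<Rightarrow> 'a \<Rightarrow> bool) \<Rightarrow> nat \<Rightarrow> bool" where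
  "girth_ge E g \<longleftrightarrow> (\<forall>xs. is_cycle E xs \<longrightarrow> g \<le> length xs)"

definition rad_less :: "'a set \<Rightarrow> ('a \<Rightarrow> 'a \<Rightarrow> bool) \<Rightarrow> ('a \<Rightarrow> 'a) \<Rightarrow> real \<Rightarrow> bool" where
  "rad_less V E \<psi> r \<longleftrightarrow> (\<forall>v\<in>V. \<exists>k. gdist E v (\<psi> v) = enat k \<and> real k < r)"

text \<open>Pr over v uniform in V and u_0..u_(m-1) i.i.d. uniform in N(v) that
|psi({u_0,...,u_(m-1)})| < m, computed by counting.\<close>
definition collision_prob :: "'a set \<Rightarrow> ('a \<Rightarrow> 'a \<Rightarrow> bool) \<Rightarrow> ('a \<Rightarrow> 'a) \<Rightarrow> nat \<Rightarrow> real" where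
  "collision_prob V E \<psi> m =
     (\<Sum>v\<in>V. real (card {us \<in> {..<m} \<rightarrow>\<^sub>E neighbors V E v. card (\<psi> ` us ` {..<m}) < m})
               / real (card (neighbors V E v)) ^ m) / real (card V)"

end

theory Submission
  imports Defs
begin

text \<open>Fix for every vertex u a shortest walk P u from u to \<psi> u; by the radius bound it has fewer
  than g/2 vertices. If two distinct neighbours u, u' of v satisfy \<psi> u = \<psi> u', then P u, P u'
  and v close a cycle shorter than g unless one of the two walks makes its first step to v.
  So, writing R u for the second vertex of P u, a collision among samples u_1, ..., u_m from
  N(v) forces two equal samples or a sample in C v = {u \<in> N(v). R u = v}, which by the union
  bound has probability at most (C(m,2) + m |C v|) / d. The sets C v are disjoint, so averaging
  over v gives the bound (C(m,2) + m) / d = m(m+1) / 2d < m^2 / sqrt d for m \<ge> 2, while for m = 1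
  no collision is possible.\<close>

lemma is_walk_single [simp]: "is_walk E [x]"
  by (simp add: is_walk_def)

lemma is_walk_Cons2 [simp]: "is_walk E (x # y # xs) \<longleftrightarrow> E x y \<and> is_walk E (y # xs)"
  unfolding is_walk_def by (auto simp: All_less_Suc2)

lemma is_walk_Cons: "is_walk E (x # xs) \<longleftrightarrow> xs = [] \<or> E x (hd xs) \<and> is_walk E xs"
  by (cases xs) auto

lemma is_walk_append:
  "xs \<noteq> [] \<Longrightarrow> ys \<noteq> [] \<Longrightarrow>
     is_walk E (xs @ ys) \<longleftrightarrow> is_walk E xs \<and> is_walk E ys \<and> E (last xs) (hd ys)"
proof (induction xs rule: induct_list012)
  case (3 x y zs)
  then show ?case by auto
qed (auto simp: is_walk_Cons)

lemma is_walk_rev: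
  assumes "\<And>x y. E x y \<Longrightarrow> E y x" and "is_walk E xs"
  shows "is_walk E (rev xs)"
  using assms(2)
proof (induction xs rule: induct_list012)
  case (3 x y zs)
  then show ?case
    using assms(1) is_walk_append[of "rev zs @ [y]" "[x]" E] by auto
qed auto

definition shortest_walk :: "('a \<Rightarrow> 'a \<Rightarrow> bool) \<Rightarrow> 'a list \<Rightarrow> 'a \<Rightarrow> 'a \<Rightarrow> bool" where
  "shortest_walk E p u w \<longleftrightarrow> is_walk E p \<and> hd p = u \<and> last p = w \<and>
     (\<forall>q. is_walk E q \<and> hd q = u \<and> last q = w \<longrightarrow> length p \<le> length q)"

lemma shortest_walk_le:
  "shortest_walk E p u w \<Longrightarrow> is_walk E q \<Longrightarrow> hd q = u \<Longrightarrow> last q = w \<Longrightarrow> length p \<le> length q"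
  by (simp add: shortest_walk_def)

lemma shortest_walk_exists:
  assumes "gdist E u w = enat k"
  obtains p where "shortest_walk E p u w" and "length p = Suc k"
proof -
  let ?W = "{xs. is_walk E xs \<and> hd xs = u \<and> last xs = w}"
  let ?L = "(\<lambda>xs. enat (length xs - 1)) ` ?W"
  have "?W \<noteq> {}"
  proof
    assume "?W = {}"
    then have "gdist E u w = \<infinity>"
      unfolding gdist_def by (subst \<open>?W = {}\<close>) (simp add: top_enat_def)
    with assms show False by simp
  qed
  then have "Inf ?L \<in> ?L"
    unfolding Inf_enat_def by (auto intro: LeastI)
  then obtain p where p: "p \<in> ?W" and Inf_p: "Inf ?L = enat (length p - 1)"
    by auto
  have "length p \<le> length q" if "q \<in> ?W" for q
  proof -
    have "Inf ?L \<le> enat (length q - 1)"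
      using that by (auto intro: Inf_lower)
    moreover have "p \<noteq> []" "q \<noteq> []"
      using p that by (auto simp: is_walk_def)
    ultimately show ?thesis
      using Inf_p by (cases p; cases q) auto
  qed
  moreover have "p \<noteq> []"
    using p by (auto simp: is_walk_def)
  ultimately show thesis
    using that[of p] p Inf_p assms by (auto simp: shortest_walk_def gdist_def)
qed

lemma shortest_walk_distinct:
  assumes "shortest_walk E p u w"
  shows "distinct p"
proof (rule ccontr)
  assume "\<not> distinct p"
  then obtain a y b c where p: "p = a @ [y] @ b @ [y] @ c"
    using not_distinct_decomp by blast
  define q where "q = a @ [y] @ c"
  have walk_p: "is_walk E p"
    using assms by (simp add: shortest_walk_def)
  have "is_walk E (a @ [y])"
    using walk_p p is_walk_append[of "a @ [y]" "b @ [y] @ c" E] by simp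
  moreover have "is_walk E ([y] @ c)"
    using walk_p p is_walk_append[of "a @ [y] @ b" "[y] @ c" E] by simp
  ultimately have "is_walk E q"
    unfolding q_def using is_walk_append[of "a @ [y]" c E] by (cases c) auto
  moreover have "hd q = u" and "last q = w"
    using assms p unfolding q_def shortest_walk_def by (cases a; cases c rule: rev_cases; simp)+
  ultimately have "length p \<le> length q"
    by (rule shortest_walk_le[OF assms])
  then show False
    by (simp add: p q_def)
qed

lemma shortest_walk_nth_1_eq_neighbour:
  assumes "simple_graph V E" and sp: "shortest_walk E p u w" and "E u v" and "v \<in> set p"
  shows "p ! 1 = v"
proof -
  obtain a b where p: "p = a @ v # b"
    using \<open>v \<in> set p\<close> by (meson split_list)
  have walk: "is_walk E p" "hd p = u" "last p = w"
    using sp by (auto simp: shortest_walk_def)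
  have "u \<noteq> v"
    using assms(1,3) by (simp add: simple_graph_def)
  then obtain r where a: "a = u # r"
    using walk(2) p by (cases a) auto
  show ?thesis
  proof (cases r)
    case Nil
    then show ?thesis using p a by simp
  next
    case (Cons z r')
    have "is_walk E (u # v # b)"
      using walk(1) p a \<open>E u v\<close> is_walk_append[of a "v # b" E] by simp
    moreover have "last (u # v # b) = w"
      using walk(3) p by simp
    ultimately have "length p \<le> length (u # v # b)"
      by (intro shortest_walk_le[OF sp]) auto
    then show ?thesis
      using p a Cons by simp
  qed
qed

lemma cycle_from_two_paths:
  assumes sym: "\<And>x y. E x y \<Longrightarrow> E y x"
    and p: "is_walk E p" "distinct p" "hd p = u"
    and p': "is_walk E p'" "distinct p'" "hd p' = u'"
    and "last p = last p'" and "E v u" "E v u'" "u \<noteq> u'"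
    and "v \<notin> set p" "v \<notin> set p'"
  obtains C where "is_cycle E C" and "length C \<le> length p + length p'"
proof -
  have "p \<noteq> []" "p' \<noteq> []"
    using p p' by (auto simp: is_walk_def)
  then have "last p \<in> set p'"
    using \<open>last p = last p'\<close> by simp
  then obtain a x b where pab: "p = a @ x # b" and "x \<in> set p'"
    and a_off: "\<forall>y\<in>set a. y \<notin> set p'"
    using \<open>p \<noteq> []\<close> split_list_first_prop[of p "\<lambda>y. y \<in> set p'"] by (metis last_in_set)
  obtain c e where pce: "p' = c @ x # e"
    using \<open>x \<in> set p'\<close> by (meson split_list)
  \<comment> \<open>Follow p up to its first vertex x on p', return along p' to u' and close up through v.\<close>
  define D where "D = (a @ [x]) @ rev c"
  define C where "C = v # D"
  have walk_ax: "is_walk E (a @ [x])"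
    using p(1) pab is_walk_append[of "a @ [x]" b E] by (cases b) auto
  have hd_D: "hd D = u"
    using p(3) pab unfolding D_def by (cases a) auto
  have last_D: "E (last D) v"
  proof (cases c rule: rev_cases)
    case Nil
    then show ?thesis using p'(3) pce sym \<open>E v u'\<close> by (simp add: D_def)
  next
    case (snoc c' y)
    then show ?thesis using p'(3) pce sym \<open>E v u'\<close> by (cases c') (auto simp: D_def)
  qed
  have "is_walk E D"
  proof (cases "c = []")
    case True
    then show ?thesis using walk_ax by (simp add: D_def)
  next
    case False
    then have "is_walk E c" and "E (last c) x"
      using p'(1) pce is_walk_append[of c "x # e" E] by auto
    then have "is_walk E (rev c)" and "E x (hd (rev c))"
      using is_walk_rev[OF sym] sym False by (auto simp: hd_rev)
    then show ?thesis
      using walk_ax False is_walk_append[of "a @ [x]" "rev c" E] by (simp add: D_def)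
  qed
  then have "is_walk E C"
    using hd_D \<open>E v u\<close> by (simp add: C_def is_walk_Cons)
  moreover have "E (last C) (hd C)"
    using last_D by (simp add: C_def D_def)
  moreover have "distinct C"
    using p(2) p'(2) pab pce a_off \<open>v \<notin> set p\<close> \<open>v \<notin> set p'\<close> by (auto simp: C_def D_def)
  moreover have "length C \<ge> 3"
  proof (rule ccontr)
    assume "\<not> 3 \<le> length C"
    then have "a = []" "c = []"
      by (cases a; cases c; simp add: C_def D_def)+
    then show False
      using p(3) p'(3) pab pce \<open>u \<noteq> u'\<close> by simp
  qed
  ultimately have "is_cycle E C"
    by (simp add: is_cycle_def)
  moreover have "length C \<le> length p + length p'"
    using pab pce by (simp add: C_def D_def)
  ultimately show thesis
    by (rule that)
qed

lemma shortest_walk_through_common_neighbour: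
  assumes G: "simple_graph V E" and "girth_ge E g"
    and sp: "shortest_walk E p u w" and sp': "shortest_walk E p' u' w"
    and "E v u" "E v u'" "u \<noteq> u'" and "length p + length p' < g"
  shows "p ! 1 = v \<or> p' ! 1 = v"
proof (rule ccontr)
  assume "\<not> ?thesis"
  moreover have sym: "\<And>x y. E x y \<Longrightarrow> E y x"
    using G by (simp add: simple_graph_def)
  ultimately have "v \<notin> set p" "v \<notin> set p'"
    using shortest_walk_nth_1_eq_neighbour[OF G sp] shortest_walk_nth_1_eq_neighbour[OF G sp']
      \<open>E v u\<close> \<open>E v u'\<close> by blast+
  moreover have "is_walk E p" "hd p = u" "is_walk E p'" "hd p' = u'" "last p = last p'"
    using sp sp' by (auto simp: shortest_walk_def)
  ultimately obtain C where "is_cycle E C" "length C \<le> length p + length p'"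
    using cycle_from_two_paths[of E p u p' u' v] sym shortest_walk_distinct[OF sp]
      shortest_walk_distinct[OF sp'] \<open>E v u\<close> \<open>E v u'\<close> \<open>u \<noteq> u'\<close> by blast
  then show False
    using \<open>girth_ge E g\<close> \<open>length p + length p' < g\<close> by (auto simp: girth_ge_def)
qed

lemma exists_first_step_map:
  assumes "simple_graph V E" and "girth_ge E g" and "rad_less V E \<psi> (real g / 2 - 1)"
  obtains R where "\<And>v u u'. u \<in> neighbors V E v \<Longrightarrow> u' \<in> neighbors V E v \<Longrightarrow> u \<noteq> u' \<Longrightarrow>
    \<psi> u = \<psi> u' \<Longrightarrow> R u = v \<or> R u' = v"
proof -
  have "\<exists>p. shortest_walk E p u (\<psi> u) \<and> 2 * length p < g" if "u \<in> V" for u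
  proof -
    obtain k where k: "gdist E u (\<psi> u) = enat k" and "real k < real g / 2 - 1"
      using assms(3) \<open>u \<in> V\<close> by (auto simp: rad_less_def)
    then have "real (2 * Suc k) < real g"
      by simp
    then have "2 * Suc k < g"
      by (simp only: of_nat_less_iff)
    with shortest_walk_exists[OF k] show ?thesis
      by metis
  qed
  then obtain P where P: "\<And>u. u \<in> V \<Longrightarrow> shortest_walk E (P u) u (\<psi> u) \<and> 2 * length (P u) < g"
    by metis
  show thesis
  proof (rule that[of "\<lambda>u. P u ! 1"])
    fix v u u' assume "u \<in> neighbors V E v" "u' \<in> neighbors V E v" "u \<noteq> u'" "\<psi> u = \<psi> u'"
    then have "u \<in> V" "E v u" "u' \<in> V" "E v u'"
      by (auto simp: neighbors_def)
    then have "shortest_walk E (P u) u (\<psi> u)" "shortest_walk E (P u') u' (\<psi> u)"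
      and "2 * length (P u) < g" "2 * length (P u') < g"
      using P \<open>\<psi> u = \<psi> u'\<close> by force+
    then show "P u ! 1 = v \<or> P u' ! 1 = v"
      using \<open>E v u\<close> \<open>E v u'\<close> \<open>u \<noteq> u'\<close>
      by (intro shortest_walk_through_common_neighbour[OF assms(1,2)]) auto
  qed
qed

lemma sum_lessThan_eq_choose_two: "(\<Sum>i<m. i) = m choose 2"
  by (induction m) (auto simp: numeral_2_eq_2)

lemma double_choose_two: "2 * (m choose 2) = m * (m - 1)"
  by (induction m) (auto simp: numeral_2_eq_2 algebra_simps split: nat.split)

lemma card_PiE_coords_eq_le:
  assumes "finite I" "finite N" "i \<in> I" "j \<in> I" "i \<noteq> j"
  shows "card {us \<in> I \<rightarrow>\<^sub>E N. us i = us j} \<le> card N ^ (card I - 1)"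
proof -
  let ?S = "{us \<in> I \<rightarrow>\<^sub>E N. us i = us j}"
  let ?forget_i = "\<lambda>us. restrict us (I - {i})"
  have "inj_on ?forget_i ?S"
  proof (rule inj_onI)
    fix x y assume x: "x \<in> ?S" and y: "y \<in> ?S" and eq: "?forget_i x = ?forget_i y"
    have "x k = y k" if "k \<in> I" for k
      using fun_cong[OF eq, of k] fun_cong[OF eq, of j] x y that assms(4,5)
      by (cases "k = i") auto
    then show "x = y"
      using x y by (auto intro: PiE_ext)
  qed
  then have "card ?S = card (?forget_i ` ?S)"
    by (rule card_image[symmetric])
  also have "\<dots> \<le> card ((I - {i}) \<rightarrow>\<^sub>E N)"
    by (rule card_mono) (auto simp: assms finite_PiE PiE_iff split: if_splits)
  also have "\<dots> = card N ^ (card I - 1)"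
    using assms by (simp add: card_funcsetE)
  finally show ?thesis .
qed

lemma card_PiE_coord_in:
  assumes "finite I" "C \<subseteq> N" "i \<in> I"
  shows "card {us \<in> I \<rightarrow>\<^sub>E N. us i \<in> C} = card C * card N ^ (card I - 1)"
proof -
  have "{us \<in> I \<rightarrow>\<^sub>E N. us i \<in> C} = Pi\<^sub>E I ((\<lambda>_. N)(i := C))"
    using assms(2,3) by (auto simp: PiE_def Pi_def)
  also have "card \<dots> = card C * (\<Prod>k\<in>I - {i}. card N)"
    using assms by (simp add: card_PiE prod.remove)
  finally show ?thesis
    using assms by simp
qed

lemma card_image_lessThan_less:
  assumes "card (f ` {..<m}) < m"
  obtains i j where "j < i" "i < m" "f i = f j"
proof -
  have "\<not> inj_on f {..<m}"
    using assms card_image by fastforce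
  then obtain i j where "i < m" "j < m" "i \<noteq> j" "f i = f j"
    unfolding inj_on_def by auto
  then show thesis
    using that by (cases i j rule: linorder_cases) auto
qed

lemma card_noninjective_tuples_le:
  assumes "finite N" "C \<subseteq> N"
    and collision: "\<And>x y. x \<in> N \<Longrightarrow> y \<in> N \<Longrightarrow> x \<noteq> y \<Longrightarrow> f x = f y \<Longrightarrow> x \<in> C \<or> y \<in> C"
  shows "card {us \<in> {..<m} \<rightarrow>\<^sub>E N. card (f ` us ` {..<m}) < m}
           \<le> ((m choose 2) + m * card C) * card N ^ (m - 1)"
proof -
  let ?Eq = "\<lambda>i j. {us \<in> {..<m} \<rightarrow>\<^sub>E N. us i = us j}"
  let ?In = "\<lambda>i. {us \<in> {..<m} \<rightarrow>\<^sub>E N. us i \<in> C}"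
  let ?Bad = "{us \<in> {..<m} \<rightarrow>\<^sub>E N. card (f ` us ` {..<m}) < m}"
  have "?Bad \<subseteq> (\<Union>i<m. \<Union>j<i. ?Eq i j) \<union> (\<Union>i<m. ?In i)"
  proof
    fix us assume "us \<in> ?Bad"
    then have us: "us \<in> {..<m} \<rightarrow>\<^sub>E N" and "card ((\<lambda>k. f (us k)) ` {..<m}) < m"
      by (simp_all add: image_image)
    from this(2) obtain i j where ij: "j < i" "i < m" "f (us i) = f (us j)"
      by (rule card_image_lessThan_less)
    moreover have "us i \<in> N" "us j \<in> N"
      using us ij by (auto simp: PiE_iff)
    ultimately have "us i = us j \<or> us i \<in> C \<or> us j \<in> C"
      using collision by blast
    then show "us \<in> (\<Union>i<m. \<Union>j<i. ?Eq i j) \<union> (\<Union>i<m. ?In i)"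
      using us ij by auto
  qed
  then have "card ?Bad \<le> card ((\<Union>i<m. \<Union>j<i. ?Eq i j) \<union> (\<Union>i<m. ?In i))"
    by (rule card_mono[rotated]) (auto simp: assms(1) finite_PiE)
  also have "\<dots> \<le> card (\<Union>i<m. \<Union>j<i. ?Eq i j) + card (\<Union>i<m. ?In i)"
    by (rule card_Un_le)
  also have "\<dots> \<le> (\<Sum>i<m. \<Sum>j<i. card (?Eq i j)) + (\<Sum>i<m. card (?In i))"
    by (intro add_mono order.trans[OF card_UN_le] sum_mono card_UN_le) auto
  also have "\<dots> \<le> (\<Sum>i<m. \<Sum>j<i. card N ^ (m - 1)) + (\<Sum>i<m. card C * card N ^ (m - 1))"
    using card_PiE_coords_eq_le[of "{..<m}" N] card_PiE_coord_in[of "{..<m}" C N] assms(1,2)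
    by (intro add_mono sum_mono) auto
  also have "\<dots> = ((m choose 2) + m * card C) * card N ^ (m - 1)"
    by (simp add: sum_distrib_right[symmetric] sum_lessThan_eq_choose_two algebra_simps)
  finally show ?thesis .
qed

lemma collision_prob_eq_0:
  assumes "m \<le> 1"
  shows "collision_prob V E \<psi> m = 0"
proof -
  have "m = 0 \<or> m = 1"
    using assms by auto
  then have "\<not> card (\<psi> ` us ` {..<m}) < m" for us :: "nat \<Rightarrow> 'a"
    by auto
  then show ?thesis
    by (simp add: collision_prob_def)
qed

lemma collision_prob_le:
  assumes "finite V" and "regular V E d" and "d > 0" and "m \<ge> 1"
    and first_step: "\<And>v u u'. u \<in> neighbors V E v \<Longrightarrow> u' \<in> neighbors V E v \<Longrightarrow> u \<noteq> u' \<Longrightarrow>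
      \<psi> u = \<psi> u' \<Longrightarrow> R u = v \<or> R u' = v"
  shows "collision_prob V E \<psi> m \<le> (real (m choose 2) + m) / d"
proof -
  define C where "C v = {u \<in> neighbors V E v. R u = v}" for v
  define A where "A v = {us \<in> {..<m} \<rightarrow>\<^sub>E neighbors V E v. card (\<psi> ` us ` {..<m}) < m}" for v
  have fin_N: "finite (neighbors V E v)" for v
    using assms(1) by (simp add: neighbors_def)
  have card_N: "card (neighbors V E v) = d" if "v \<in> V" for v
    using assms(2) that by (simp add: regular_def)
  have per_vertex: "real (card (A v)) / real d ^ m \<le> (real (m choose 2) + m * real (card (C v))) / d"
    if "v \<in> V" for v
  proof -
    have "card (A v) \<le> ((m choose 2) + m * card (C v)) * d ^ (m - 1)"
      unfolding A_def card_N[OF that, symmetric]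
      by (rule card_noninjective_tuples_le[OF fin_N]) (use first_step in \<open>auto simp: C_def\<close>)
    then have "real (card (A v)) \<le> (real (m choose 2) + m * real (card (C v))) * real d ^ (m - 1)"
      by (metis of_nat_add of_nat_le_iff of_nat_mult of_nat_power)
    moreover have "real d ^ m = real d * real d ^ (m - 1)"
      using \<open>m \<ge> 1\<close> by (metis Suc_diff_le diff_Suc_1 power_Suc)
    ultimately show ?thesis
      using \<open>d > 0\<close> by (simp add: divide_simps)
  qed
  have "(\<Sum>v\<in>V. card (C v)) = card (\<Union>v\<in>V. C v)"
    using fin_N by (intro card_UN_disjoint[symmetric]) (auto simp: assms(1) C_def)
  also have "\<dots> \<le> card V"
    by (rule card_mono[OF assms(1)]) (auto simp: C_def neighbors_def)
  finally have sum_C: "(\<Sum>v\<in>V. real (card (C v))) \<le> real (card V)"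
    by (metis of_nat_le_iff of_nat_sum)
  have "collision_prob V E \<psi> m = (\<Sum>v\<in>V. real (card (A v)) / real d ^ m) / real (card V)"
    unfolding collision_prob_def A_def using card_N by simp
  also have "\<dots> \<le> (\<Sum>v\<in>V. (real (m choose 2) + m * real (card (C v))) / d) / real (card V)"
    by (intro divide_right_mono sum_mono per_vertex) auto
  also have "\<dots> = (real (card V) * real (m choose 2) + m * (\<Sum>v\<in>V. real (card (C v))))
      / (d * real (card V))"
    by (simp add: sum_divide_distrib[symmetric] sum.distrib sum_distrib_left)
  also have "\<dots> \<le> (real (card V) * real (m choose 2) + m * real (card V)) / (d * real (card V))"
    using sum_C by (intro divide_right_mono add_left_mono mult_left_mono) auto
  also have "\<dots> \<le> (real (m choose 2) + m) / d"
    using \<open>d > 0\<close> by (cases "card V = 0") (simp_all add: field_simps)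
  finally show ?thesis .
qed

lemma choose_two_add_less_square:
  assumes "2 \<le> m"
  shows "(m choose 2) + m < m ^ 2"
proof -
  obtain k where "m = k + 2"
    using assms by (metis add.commute le_Suc_ex)
  then have "2 * ((m choose 2) + m) < 2 * m ^ 2"
    using double_choose_two[of m] by (simp add: power2_eq_square algebra_simps)
  then show ?thesis
    by simp
qed

lemma sqrt_le_of_nat_self: "sqrt (real d) \<le> real d"
proof (cases "d = 0")
  case False
  then have "real d \<le> real d * real d"
    by (simp add: mult_le_cancel_left1)
  then have "sqrt (real d) \<le> sqrt (real d * real d)"
    by (rule real_sqrt_le_mono)
  then show ?thesis
    by simp
qed simp

theorem lemma2:
  fixes V :: "'a set" and E :: "'a \<Rightarrow> 'a \<Rightarrow> bool" and \<psi> :: "'a \<Rightarrow> 'a"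
    and n d g m :: nat
  assumes "simple_graph V E" and "finite V" and "card V = n" and "n > 0"
    and "regular V E d" and "d > 0"
    and "girth_ge E g"
    and "m \<ge> 1"
    and "\<psi> ` V \<subseteq> V"
    and "rad_less V E \<psi> (real g / 2 - 1)"
  shows "collision_prob V E \<psi> m < real m ^ 2 / sqrt (real d)"
proof (cases "m = 1")
  case True
  then show ?thesis
    using \<open>d > 0\<close> by (simp add: collision_prob_eq_0)
next
  case False
  with \<open>m \<ge> 1\<close> have "2 \<le> m"
    by simp
  obtain R where "\<And>v u u'. u \<in> neighbors V E v \<Longrightarrow> u' \<in> neighbors V E v \<Longrightarrow> u \<noteq> u' \<Longrightarrow>
      \<psi> u = \<psi> u' \<Longrightarrow> R u = v \<or> R u' = v"
    using exists_first_step_map[OF assms(1,7,10)] by blast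
  then have "collision_prob V E \<psi> m \<le> (real (m choose 2) + m) / d"
    by (rule collision_prob_le[OF assms(2,5,6,8)])
  also have "\<dots> < real m ^ 2 / d"
    using choose_two_add_less_square[OF \<open>2 \<le> m\<close>] \<open>d > 0\<close>
    by (intro divide_strict_right_mono) (simp_all flip: of_nat_power of_nat_add)
  also have "\<dots> \<le> real m ^ 2 / sqrt d"
    using \<open>d > 0\<close> sqrt_le_of_nat_self[of d] by (intro divide_left_mono) auto
  finally show ?thesis .
qed

end
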